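(* Let $n\ge 2$ be an integer and $M$ a real $n\times n$ matrix with all entries in $\{0,1\}$. Let $t$ be the number of entries equal to $1$ and $k := t/n$. Then: if $t < n$: $|\det M| \le k^{n/2}$; if $t = n$: $|\det M| \le 1$; if $t > n$: $|\det M| \le k^{\frac{n+1}{2}}\left(\frac{n-k}{n-1}\right)^{\frac{n-1}{2}}$. *)

theory Defs
  imports "HOL-Analysis.Analysis"
begin

end

theory Submission
  imports Defs
begin

text \<open>
  Gram--Schmidt on the rows changes no determinant and only shortens rows, which gives
  Hadamard's inequality \<open>det A\<^sup>2 \<le> \<Prod>i. \<parallel>A\<^sub>i\<parallel>\<^sup>2\<close>. For a 0/1 matrix the squared row norms
  add up to \<open>t\<close>, so AM--GM bounds the product by \<open>k\<^sup>n\<close>.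

  For \<open>t > n\<close>, first rotate \<open>M\<close> by an orthogonal matrix with a row \<open>(1,\<dots>,1)/\<surd>n\<close>: this
  keeps \<open>|det M|\<close> and the total \<open>t\<close> of the squared row norms, and creates a row whose squared
  norm \<open>\<mu> = \<Sum>j c\<^sub>j\<^sup>2 / n\<close> (with column sums \<open>c\<^sub>j\<close>) is at least \<open>k\<^sup>2\<close> by Cauchy--Schwarz.
  Hadamard with AM--GM on the remaining \<open>n - 1\<close> rows gives \<open>det\<^sup>2 \<le> \<mu> ((t - \<mu>)/(n - 1))\<^bsup>n-1\<^esup>\<close>,
  and \<open>\<mu> \<mapsto> \<mu> (t - \<mu>)\<^bsup>n-1\<^esup>\<close> decreases for \<open>\<mu> \<ge> t/n = k\<close>; since \<open>k \<ge> 1\<close> we have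
  \<open>k\<^sup>2 \<ge> k\<close>, so \<open>\<mu>\<close> may be replaced by \<open>k\<^sup>2\<close>.
\<close>

lemma row_lambda: "row i (\<chi> k. f k) = (f i :: 'a::zero^'n)"
  by (simp add: row_def vec_eq_iff)

lemma Gram_Schmidt_row_step:
  fixes B :: "real^'n^'n"
  assumes "finite F" "x \<notin> F" and orth: "pairwise (\<lambda>i j. orthogonal (row i B) (row j B)) F"
  obtains B' where "det B' = det B" "norm (row x B') \<le> norm (row x B)"
    "\<And>i. i \<noteq> x \<Longrightarrow> row i B' = row i B" "\<And>j. j \<in> F \<Longrightarrow> orthogonal (row x B') (row j B)"
proof -
  define R where "R = (\<lambda>j. row j B) ` F"
  have "pairwise orthogonal R"
    using orth unfolding R_def pairwise_image by (auto simp: pairwise_def)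
  define p where "p = (\<Sum>b\<in>R. (b \<bullet> row x B / (b \<bullet> b)) *\<^sub>R b)"
  have p_span: "p \<in> span R"
    unfolding p_def by (intro span_sum span_scale span_base)
  have perp: "orthogonal y (row x B - p)" if "y \<in> span R" for y
    unfolding p_def by (rule Gram_Schmidt_step) fact+
  define B' where "B' = (\<chi> k. if k = x then row x B + (- p) else row k B)"
  have row_B': "row k B' = (if k = x then row x B - p else row k B)" for k
    unfolding B'_def row_lambda by simp
  have "R \<subseteq> {row j B |j. j \<noteq> x}"
    using \<open>x \<notin> F\<close> unfolding R_def by auto
  then have "p \<in> span {row j B |j. j \<noteq> x}"
    using p_span span_mono by blast
  then have "- p \<in> vec.span {row j B |j. j \<noteq> x}"
    unfolding span_vec_eq by (rule span_neg)
  then have "det B' = det B"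
    unfolding B'_def by (rule det_row_span)
  moreover have "norm (row x B - p) \<le> norm (row x B)"
  proof -
    have "orthogonal (row x B - p) p"
      using perp[OF p_span] orthogonal_commute by blast
    then have "norm (row x B) ^ 2 = norm (row x B - p) ^ 2 + norm p ^ 2"
      using norm_add_Pythagorean by fastforce
    then have "norm (row x B - p) ^ 2 \<le> norm (row x B) ^ 2"
      by simp
    then show ?thesis
      by (rule power2_le_imp_le) simp
  qed
  moreover have "orthogonal (row x B - p) (row j B)" if "j \<in> F" for j
    using perp[of "row j B"] that orthogonal_commute unfolding R_def by (blast intro: span_base)
  ultimately show ?thesis
    using that[of B'] by (simp add: row_B')
qed

lemma Gram_Schmidt_rows:
  fixes A :: "real^'n^'n"
  assumes "finite S"
  shows "\<exists>B. det B = det A \<and> (\<forall>i. norm (row i B) \<le> norm (row i A))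
           \<and> pairwise (\<lambda>i j. orthogonal (row i B) (row j B)) S"
  using assms
proof (induction S rule: finite_induct)
  case empty
  then show ?case by auto
next
  case (insert x F)
  then obtain B where B: "det B = det A" "\<forall>i. norm (row i B) \<le> norm (row i A)"
    and orth: "pairwise (\<lambda>i j. orthogonal (row i B) (row j B)) F" by blast
  obtain B' where B': "det B' = det B" "norm (row x B') \<le> norm (row x B)"
    "\<And>i. i \<noteq> x \<Longrightarrow> row i B' = row i B" "\<And>j. j \<in> F \<Longrightarrow> orthogonal (row x B') (row j B)"
    using Gram_Schmidt_row_step[OF insert.hyps orth] by blast
  have "norm (row i B') \<le> norm (row i A)" for i
    using B(2)[rule_format, of i] B'(2,3) by (cases "i = x") auto
  moreover have "pairwise (\<lambda>i j. orthogonal (row i B') (row j B')) (insert x F)"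
    unfolding pairwise_insert
  proof (intro conjI allI impI)
    have row_F: "row j B' = row j B" if "j \<in> F" for j
      using insert.hyps(2) that by (intro B'(3)) auto
    then show "pairwise (\<lambda>i j. orthogonal (row i B') (row j B')) F"
      using orth by (simp add: pairwise_def)
    fix j assume "j \<in> F \<and> j \<noteq> x"
    then show "orthogonal (row x B') (row j B')"
      using B'(4) row_F by simp
    then show "orthogonal (row j B') (row x B')"
      using orthogonal_commute by blast
  qed
  ultimately show ?case
    using B(1) B'(1) by (intro exI[of _ B']) simp
qed

theorem Hadamard_inequality:
  fixes A :: "real^'n^'n"
  shows "det A ^ 2 \<le> (\<Prod>i\<in>UNIV. norm (row i A) ^ 2)"
proof -
  obtain B where B: "det B = det A" "\<forall>i. norm (row i B) \<le> norm (row i A)"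
    and orth: "pairwise (\<lambda>i j. orthogonal (row i B) (row j B)) UNIV"
    using Gram_Schmidt_rows[of UNIV A] by auto
  have gram: "(B ** transpose B) $ i $ j = row i B \<bullet> row j B" for i j
    by (simp add: matrix_matrix_mult_def transpose_def inner_vec_def row_def)
  have "det A ^ 2 = det (B ** transpose B)"
    by (simp add: B(1)[symmetric] det_mul det_transpose power2_eq_square)
  also have "\<dots> = (\<Prod>i\<in>UNIV. norm (row i B) ^ 2)"
    using orth by (subst det_diagonal)
      (auto simp: gram pairwise_def orthogonal_def power2_norm_eq_inner)
  also have "\<dots> \<le> (\<Prod>i\<in>UNIV. norm (row i A) ^ 2)"
    using B(2) by (intro prod_mono) (auto intro!: power_mono)
  finally show ?thesis .
qed

lemma prod_le_mean_power:
  fixes x :: "'a \<Rightarrow> real"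
  assumes "finite S" "S \<noteq> {}" "\<And>i. i \<in> S \<Longrightarrow> x i \<ge> 0"
  shows "(\<Prod>i\<in>S. x i) \<le> ((\<Sum>i\<in>S. x i) / card S) ^ card S"
proof (cases "(\<Prod>i\<in>S. x i) = 0")
  case True
  have "0 \<le> (\<Sum>i\<in>S. x i) / card S"
    using assms by (simp add: sum_nonneg)
  then show ?thesis
    unfolding True by simp
next
  case False
  then have pos: "(\<Prod>i\<in>S. x i) > 0"
    using assms by (simp add: prod_nonneg order.not_eq_order_implies_strict)
  have "card S > 0"
    using assms by (simp add: card_gt_0_iff)
  then have "(\<Prod>i\<in>S. x i) = ((\<Prod>i\<in>S. x i) powr (1 / card S)) ^ card S"
    using pos by (simp add: powr_realpow[symmetric] powr_powr)
  also have "\<dots> \<le> ((\<Sum>i\<in>S. x i) / card S) ^ card S"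
    using arith_geom_mean[OF assms] by (intro power_mono) (simp_all add: sum_divide_distrib)
  finally show ?thesis .
qed

lemma power2_powr_half:
  fixes x :: real
  assumes "0 \<le> x" "0 < m"
  shows "(x powr (real m / 2)) ^ 2 = x ^ m"
proof (cases "x = 0")
  case False
  then have "x > 0"
    using assms(1) by simp
  then show ?thesis
    by (simp add: powr_realpow[symmetric] powr_powr)
qed (use assms(2) in simp)

lemma abs_le_powr_half:
  fixes a x :: real
  assumes "0 \<le> x" "0 < m" "a ^ 2 \<le> x ^ m"
  shows "\<bar>a\<bar> \<le> x powr (real m / 2)"
  by (rule power2_le_imp_le) (use assms power2_powr_half in auto)

lemma abs_le_powr_half_mult:
  fixes a x y :: real
  assumes "0 \<le> x" "0 \<le> y" "0 < m" "0 < l" "a ^ 2 \<le> x ^ m * y ^ l"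
  shows "\<bar>a\<bar> \<le> x powr (real m / 2) * y powr (real l / 2)"
  by (rule power2_le_imp_le) (use assms power2_powr_half in \<open>auto simp: power_mult_distrib\<close>)

lemma mult_power_diff_decreasing:
  fixes T a b :: real and q :: nat
  assumes "q \<ge> 1" "0 \<le> a" "a \<le> b" "b \<le> T" "T \<le> (real q + 1) * a"
  shows "b * (T - b) ^ q \<le> a * (T - a) ^ q"
proof -
  let ?f = "\<lambda>x. x * (T - x) ^ q"
  have "?f b \<le> ?f a"
  proof (rule DERIV_nonpos_imp_nonincreasing[OF assms(3)])
    fix x assume x: "a \<le> x" "x \<le> b"
    have D: "(?f has_real_derivative ((T - x) ^ q - x * (real q * (T - x) ^ (q - 1)))) (at x)"
      by (auto intro!: derivative_eq_intros)
    have "(T - x) ^ q = (T - x) * (T - x) ^ (q - 1)"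
      using assms(1) by (simp add: power_eq_if)
    then have "(T - x) ^ q - x * (real q * (T - x) ^ (q - 1)) = (T - x) ^ (q - 1) * (T - (real q + 1) * x)"
      by (simp add: algebra_simps)
    also have "\<dots> \<le> 0"
    proof (rule mult_nonneg_nonpos)
      show "0 \<le> (T - x) ^ (q - 1)"
        using x assms by simp
      have "(real q + 1) * a \<le> (real q + 1) * x"
        using x by (intro mult_left_mono) auto
      then show "T - (real q + 1) * x \<le> 0"
        using assms(5) by linarith
    qed
    finally show "\<exists>y. (?f has_real_derivative y) (at x) \<and> y \<le> 0"
      using D by blast
  qed
  then show ?thesis by simp
qed

lemma sum_row_norm_sq_eq_sum_column_norm_sq:
  fixes A :: "real^'n^'m"
  shows "(\<Sum>i\<in>UNIV. norm (row i A) ^ 2) = (\<Sum>j\<in>UNIV. norm (column j A) ^ 2)"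
  by (simp add: power2_norm_eq_inner inner_vec_def row_def column_def) (rule sum.swap)

lemma sum_row_norm_sq_orthogonal_mult:
  fixes Q A :: "real^'n^'n"
  assumes "orthogonal_matrix Q"
  shows "(\<Sum>i\<in>UNIV. norm (row i (Q ** A)) ^ 2) = (\<Sum>i\<in>UNIV. norm (row i A) ^ 2)"
proof -
  have "orthogonal_transformation ((*v) Q)"
    using assms by (simp add: orthogonal_transformation_matrix matrix_of_matrix_vector_mul)
  moreover have "column j (Q ** A) = Q *v column j A" for j
    by (simp add: vec_eq_iff column_def matrix_matrix_mult_def matrix_vector_mult_def)
  ultimately show ?thesis
    by (simp add: sum_row_norm_sq_eq_sum_column_norm_sq orthogonal_transformation_norm)
qed

lemma det_sq_le_mean_row_norm_power:
  fixes A :: "real^'n^'n"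
  shows "det A ^ 2 \<le> ((\<Sum>i\<in>UNIV. norm (row i A) ^ 2) / CARD('n)) ^ CARD('n)"
  using Hadamard_inequality[of A] prod_le_mean_power[of UNIV "\<lambda>i. norm (row i A) ^ 2"]
  by simp

lemma det_sq_le_row_split:
  fixes A :: "real^'n^'n"
  defines "F \<equiv> \<Sum>i\<in>UNIV. norm (row i A) ^ 2"
  assumes "CARD('n) \<ge> 2"
  shows "det A ^ 2 \<le> norm (row r A) ^ 2 * ((F - norm (row r A) ^ 2) / (real CARD('n) - 1)) ^ (CARD('n) - 1)"
proof -
  let ?x = "\<lambda>i. norm (row i A) ^ 2" and ?S = "UNIV - {r}"
  have card: "card ?S = CARD('n) - 1"
    by (simp add: card_Diff_singleton)
  then have "card ?S \<noteq> 0"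
    using assms(2) by simp
  then have "?S \<noteq> {}"
    by (metis card.empty)
  have "det A ^ 2 \<le> ?x r * (\<Prod>i\<in>?S. ?x i)"
    using Hadamard_inequality[of A] prod.remove[of UNIV r ?x] by simp
  also have "\<dots> \<le> ?x r * ((\<Sum>i\<in>?S. ?x i) / card ?S) ^ card ?S"
    using \<open>?S \<noteq> {}\<close> by (intro mult_left_mono prod_le_mean_power) auto
  also have "(\<Sum>i\<in>?S. ?x i) = F - ?x r"
    unfolding F_def using sum.remove[of UNIV r ?x] by simp
  finally show ?thesis
    unfolding card using assms(2) by (simp add: of_nat_diff)
qed

lemma exists_row_of_column_sums:
  fixes A :: "real^'n^'n"
  obtains N r where "\<bar>det N\<bar> = \<bar>det A\<bar>"
    "(\<Sum>i\<in>UNIV. norm (row i N) ^ 2) = (\<Sum>i\<in>UNIV. norm (row i A) ^ 2)"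
    "\<And>j. row r N $ j = (\<Sum>i\<in>UNIV. A $ i $ j) / sqrt CARD('n)"
proof -
  define u :: "real^'n" where "u = (1 / sqrt CARD('n)) *\<^sub>R 1"
  have "norm u = 1"
    by (simp add: u_def norm_eq_sqrt_inner inner_vec_def)
  then obtain P r where P: "orthogonal_matrix P" "P *v axis r 1 = u"
    using orthogonal_matrix_exists_basis by blast
  have P_col: "P $ i $ r = u $ i" for i
    using P(2) by (simp add: vec_eq_iff matrix_vector_mult_def axis_def if_distrib cong: if_cong)
  define N where "N = transpose P ** A"
  have "\<bar>det N\<bar> = \<bar>det A\<bar>"
    using det_orthogonal_matrix[OF P(1)] by (auto simp: N_def det_mul det_transpose)
  moreover have "(\<Sum>i\<in>UNIV. norm (row i N) ^ 2) = (\<Sum>i\<in>UNIV. norm (row i A) ^ 2)"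
    unfolding N_def using P(1) by (simp add: sum_row_norm_sq_orthogonal_mult orthogonal_matrix_transpose)
  moreover have "row r N $ j = (\<Sum>i\<in>UNIV. A $ i $ j) / sqrt CARD('n)" for j
    by (simp add: N_def row_def matrix_matrix_mult_def transpose_def P_col u_def sum_divide_distrib)
  ultimately show ?thesis
    using that by blast
qed

lemma det_sq_le_entry_sum_bound:
  fixes A :: "real^'n^'n"
  defines "n \<equiv> CARD('n)" and "F \<equiv> \<Sum>i\<in>UNIV. norm (row i A) ^ 2"
    and "s \<equiv> (\<Sum>i\<in>UNIV. \<Sum>j\<in>UNIV. A $ i $ j) / CARD('n)"
  assumes n: "n \<ge> 2" and F: "F \<le> real n * s ^ 2"
  shows "det A ^ 2 \<le> s ^ 2 * ((F - s ^ 2) / (real n - 1)) ^ (n - 1)"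
proof -
  obtain N r where N: "\<bar>det N\<bar> = \<bar>det A\<bar>" "(\<Sum>i\<in>UNIV. norm (row i N) ^ 2) = F"
    "\<And>j. row r N $ j = (\<Sum>i\<in>UNIV. A $ i $ j) / sqrt n"
    unfolding F_def n_def using exists_row_of_column_sums[of A] by blast
  define c where "c j = (\<Sum>i\<in>UNIV. A $ i $ j)" for j
  define \<mu> where "\<mu> = norm (row r N) ^ 2"
  have "(row r N $ j) ^ 2 = c j ^ 2 / real n" for j
    unfolding N(3) c_def by (simp add: power_divide)
  then have mu: "\<mu> = (\<Sum>j\<in>UNIV. c j ^ 2) / real n"
    by (simp add: \<mu>_def power2_norm_eq_inner inner_vec_def sum_divide_distrib
        flip: power2_eq_square)
  have "s = (\<Sum>j\<in>UNIV. c j) / real n"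
    unfolding s_def c_def n_def by (subst sum.swap) simp
  then have "s ^ 2 = (\<Sum>j\<in>UNIV. c j) ^ 2 / real n ^ 2"
    by (simp add: power_divide)
  also have "\<dots> \<le> real n * (\<Sum>j\<in>UNIV. c j ^ 2) / real n ^ 2"
    using Cauchy_Schwarz_ineq_sum[of "\<lambda>_. 1" c UNIV]
    by (intro divide_right_mono) (simp_all add: n_def)
  also have "\<dots> = \<mu>"
    using n by (simp add: mu power2_eq_square)
  finally have s_mu: "s ^ 2 \<le> \<mu>" .
  have mu_F: "\<mu> \<le> F"
    unfolding \<mu>_def N(2)[symmetric] by (rule member_le_sum) auto
  have "det A ^ 2 = det N ^ 2"
    using N(1) by (metis power2_abs)
  also have "\<dots> \<le> \<mu> * ((F - \<mu>) / (real n - 1)) ^ (n - 1)"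
    using det_sq_le_row_split[of N r] n unfolding N(2) \<mu>_def n_def by simp
  also have "\<dots> = \<mu> * (F - \<mu>) ^ (n - 1) / (real n - 1) ^ (n - 1)"
    by (simp add: power_divide)
  also have "\<dots> \<le> s ^ 2 * (F - s ^ 2) ^ (n - 1) / (real n - 1) ^ (n - 1)"
  proof (intro divide_right_mono mult_power_diff_decreasing)
    show "F \<le> (real (n - 1) + 1) * s ^ 2"
      using F n by (simp add: of_nat_diff)
  qed (use n s_mu mu_F in auto)
  also have "\<dots> = s ^ 2 * ((F - s ^ 2) / (real n - 1)) ^ (n - 1)"
    by (simp add: power_divide)
  finally show ?thesis .
qed

lemma zero_one_matrix_entry_sum:
  fixes A :: "real^'n^'m"
  assumes "\<forall>i j. A $ i $ j \<in> {0, 1}"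
  shows "(\<Sum>i\<in>UNIV. \<Sum>j\<in>UNIV. A $ i $ j) = card {(i, j). A $ i $ j = 1}"
proof -
  have "A $ i $ j = of_bool (A $ i $ j = 1)" for i j
    using assms by (metis insertE of_bool_eq(1,2) singletonD zero_neq_one)
  then have "(\<Sum>j\<in>UNIV. A $ i $ j) = (\<Sum>j\<in>UNIV. of_bool (A $ i $ j = 1))" for i
    by (rule sum.cong[OF refl])
  then have "(\<Sum>i\<in>UNIV. \<Sum>j\<in>UNIV. A $ i $ j) = (\<Sum>i\<in>UNIV. card {j. A $ i $ j = 1})"
    by simp
  also have "\<dots> = card (SIGMA i:UNIV. {j. A $ i $ j = 1})"
    by (simp add: card_SigmaI)
  also have "(SIGMA i:UNIV. {j. A $ i $ j = 1}) = {(i, j). A $ i $ j = 1}"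
    by auto
  finally show ?thesis .
qed

lemma zero_one_matrix_row_norms:
  fixes A :: "real^'n^'m"
  assumes "\<forall>i j. A $ i $ j \<in> {0, 1}"
  shows "(\<Sum>i\<in>UNIV. norm (row i A) ^ 2) = (\<Sum>i\<in>UNIV. \<Sum>j\<in>UNIV. A $ i $ j)"
proof -
  have idem: "A $ i $ j * A $ i $ j = A $ i $ j" for i j
    using assms by (metis insertE mult_1 mult_zero_left singletonD)
  show ?thesis
    by (simp add: power2_norm_eq_inner inner_vec_def row_def idem)
qed

lemma card_matrix_ones_le:
  fixes A :: "'a::one^'n^'m"
  shows "card {(i, j). A $ i $ j = 1} \<le> CARD('m) * CARD('n)"
proof -
  have "card {(i, j). A $ i $ j = 1} \<le> CARD('m \<times> 'n)"
    by (rule card_mono) auto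
  then show ?thesis
    by simp
qed

lemma zero_one_matrix_det_sq_le:
  fixes M :: "real^'n^'n"
  defines "n \<equiv> CARD('n)" and "k \<equiv> real (card {(i, j). M $ i $ j = 1}) / CARD('n)"
  assumes n: "n \<ge> 2" and entries: "\<forall>i j. M $ i $ j \<in> {0, 1}" and k: "k \<ge> 1"
  shows "det M ^ 2 \<le> k ^ (n + 1) * ((real n - k) / (real n - 1)) ^ (n - 1)"
proof -
  have F: "(\<Sum>i\<in>UNIV. norm (row i M) ^ 2) = real n * k"
    using entries n by (simp add: zero_one_matrix_row_norms zero_one_matrix_entry_sum n_def k_def)
  have s: "(\<Sum>i\<in>UNIV. \<Sum>j\<in>UNIV. M $ i $ j) / CARD('n) = k"
    using entries by (simp add: zero_one_matrix_entry_sum k_def)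
  have "k \<le> k ^ 2"
    using mult_right_mono[OF k, of k] k by (simp add: power2_eq_square)
  then have "real n * k \<le> real n * k ^ 2"
    by (rule mult_left_mono) simp
  then have "det M ^ 2 \<le> k ^ 2 * ((real n * k - k ^ 2) / (real n - 1)) ^ (n - 1)"
    using det_sq_le_entry_sum_bound[of M] n unfolding F s n_def by simp
  also have "\<dots> = k ^ (n + 1) * ((real n - k) / (real n - 1)) ^ (n - 1)"
  proof -
    have "real n * k - k ^ 2 = k * (real n - k)"
      by (simp add: power2_eq_square algebra_simps)
    moreover have "k ^ 2 * k ^ (n - 1) = k ^ (n + 1)"
      using n by (simp flip: power_add)
    ultimately show ?thesis
      by (simp add: power_mult_distrib power_divide)
  qed
  finally show ?thesis .
qed

lemma zero_one_matrix_abs_det_le: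
  fixes M :: "real^'n^'n"
  defines "k \<equiv> real (card {(i, j). M $ i $ j = 1}) / CARD('n)"
  assumes "\<forall>i j. M $ i $ j \<in> {0, 1}"
  shows "\<bar>det M\<bar> \<le> k powr (real CARD('n) / 2)"
proof (rule abs_le_powr_half)
  show "det M ^ 2 \<le> k ^ CARD('n)"
    using det_sq_le_mean_row_norm_power[of M] assms
    by (simp add: zero_one_matrix_row_norms zero_one_matrix_entry_sum)
qed (simp_all add: k_def)

lemma zero_one_matrix_abs_det_le_refined:
  fixes M :: "real^'n^'n"
  defines "n \<equiv> CARD('n)" and "k \<equiv> real (card {(i, j). M $ i $ j = 1}) / CARD('n)"
  assumes n: "n \<ge> 2" and entries: "\<forall>i j. M $ i $ j \<in> {0, 1}" and k: "k \<ge> 1"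
  shows "\<bar>det M\<bar> \<le> k powr ((real n + 1) / 2) * ((real n - k) / (real n - 1)) powr ((real n - 1) / 2)"
proof -
  have "k \<le> real n"
    using card_matrix_ones_le[of M] n unfolding k_def n_def
    by (simp add: divide_le_eq flip: of_nat_mult)
  then have "0 \<le> (real n - k) / (real n - 1)"
    using n by simp
  then have "\<bar>det M\<bar> \<le> k powr (real (n + 1) / 2) * ((real n - k) / (real n - 1)) powr (real (n - 1) / 2)"
    using zero_one_matrix_det_sq_le[OF _ entries] n k
    by (intro abs_le_powr_half_mult) (simp_all add: k_def n_def)
  moreover have "real (n + 1) = real n + 1" "real (n - 1) = real n - 1"
    using n by (simp_all add: of_nat_diff)
  ultimately show ?thesis
    by (simp only:)
qed

theorem mainTheorem13:
  fixes M :: "real ^ 'n ^ 'n"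
  assumes n2: "CARD('n) \<ge> 2"
    and entries01: "\<forall>i j. M $ i $ j \<in> {0, 1}"
  shows "let n = CARD('n); t = card {(i, j). M $ i $ j = 1}; k = real t / real n in
         (t < n \<longrightarrow> \<bar>det M\<bar> \<le> k powr (real n / 2))
       \<and> (t = n \<longrightarrow> \<bar>det M\<bar> \<le> 1)
       \<and> (t > n \<longrightarrow> \<bar>det M\<bar> \<le> k powr ((real n + 1) / 2)
              * ((real n - k) / (real n - 1)) powr ((real n - 1) / 2))"
proof -
  define n where "n = CARD('n)"
  define t where "t = card {(i, j). M $ i $ j = 1}"
  define k where "k = real t / real n"
  have "0 < n"
    by (simp add: n_def)
  have Hadamard_bound: "\<bar>det M\<bar> \<le> k powr (real n / 2)"
    using zero_one_matrix_abs_det_le[OF entries01] by (simp add: k_def t_def n_def)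
  have refined_bound: "\<bar>det M\<bar> \<le> k powr ((real n + 1) / 2) * ((real n - k) / (real n - 1)) powr ((real n - 1) / 2)"
    if "n < t"
    using zero_one_matrix_abs_det_le_refined[OF n2 entries01] that \<open>0 < n\<close>
    by (simp add: k_def t_def n_def le_divide_eq)
  show ?thesis
    unfolding Let_def n_def[symmetric] t_def[symmetric] k_def[symmetric]
  proof (intro conjI impI)
    show "\<bar>det M\<bar> \<le> 1" if "t = n"
      using Hadamard_bound that \<open>0 < n\<close> by (simp add: k_def)
  qed (use Hadamard_bound refined_bound in auto)
qed

end
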